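(* Let $n\geq 3$. There exists an $(S_1\times S_{n-1})$-equivariant acyclic matching on the face poset of $\Delta(\overline{\Pi}_n)$ such that the set of critical simplices is $C_n\cup\{\alpha_n\}$.
   Context: $\Pi_n$ is the poset of all set partitions of $[n]=\{1,\dots,n\}$ ordered by refinement (finer is smaller), and $\overline{\Pi}_n$ is obtained by removing the minimum $\{\{1\},\dots,\{n\}\}$ and maximum $\{[n]\}$. $\Delta(\overline{\Pi}_n)$ is its nerve (order complex): its simplices are the nonempty chains $x_0<x_1<\dots<x_k$ of $\overline{\Pi}_n$ (of dimension $k$), and its face poset is the set of these simplices ordered by inclusion. $S_n$ acts on $[n]$, hence on $\overline{\Pi}_n$ and on $\Delta(\overline{\Pi}_n)$; $S_1\times S_{n-1}=\{\sigma\in S_n\mid\sigma(1)=1\}$. Let $A$ be the set of partitions in $\overline{\Pi}_n$ in which every block not containing $1$ is a singleton; $C_n$ is the set of simplices of dimension $n-3$ all of whose vertices lie in $A$; $\alpha_n$ is the vertex (0-simplex) $\{\{1\},\{2,\dots,n\}\}$. A partial matching on a poset is a set of pairs $(a,b)$ with $b$ covering $a$ such that each element lies in at most one pair; it is acyclic if there is no cycle $b_1>a_1<b_2>a_2<\dots<b_t>a_t<b_1$, $t\ge2$, with distinct $b_i$ and $(a_i,b_i)$ in the matching; critical elements are the unmatched ones; a matching is $H$-equivariant if $(a,b)$ in it implies $(ha,hb)$ in it for all $h\in H$. *)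

theory Defs
  imports "HOL-Library.Disjoint_Sets" "HOL-Combinatorics.Permutations"
begin

type_synonym partition = "nat set set"
type_synonym simplex = "nat set set set"

definition refines :: "partition \<Rightarrow> partition \<Rightarrow> bool" where
  "refines P Q \<longleftrightarrow> (\<forall>B\<in>P. \<exists>C\<in>Q. B \<subseteq> C)"

definition Pi_bar :: "nat \<Rightarrow> partition set" where
  "Pi_bar n = {P. partition_on {1..n} P \<and> P \<noteq> (\<lambda>i. {i}) ` {1..n} \<and> P \<noteq> {{1..n}}}"

definition simplices :: "nat \<Rightarrow> simplex set" where
  "simplices n = {S. S \<noteq> {} \<and> finite S \<and> S \<subseteq> Pi_bar n \<and>
                     (\<forall>P\<in>S. \<forall>Q\<in>S. refines P Q \<or> refines Q P)}"

definition dim :: "simplex \<Rightarrow> nat" where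
  "dim S = card S - 1"

definition A_set :: "nat \<Rightarrow> partition set" where
  "A_set n = {P \<in> Pi_bar n. \<forall>B\<in>P. 1 \<notin> B \<longrightarrow> card B = 1}"

definition C_set :: "nat \<Rightarrow> simplex set" where
  "C_set n = {S \<in> simplices n. card S = n - 2 \<and> S \<subseteq> A_set n}"

definition alpha :: "nat \<Rightarrow> simplex" where
  "alpha n = {{{1}, {2..n}}}"

definition covers :: "'a set \<Rightarrow> ('a \<Rightarrow> 'a \<Rightarrow> bool) \<Rightarrow> 'a \<Rightarrow> 'a \<Rightarrow> bool" where
  "covers X lt a b \<longleftrightarrow> a \<in> X \<and> b \<in> X \<and> lt a b \<and> \<not> (\<exists>c\<in>X. lt a c \<and> lt c b)"

definition partial_matching :: "'a set \<Rightarrow> ('a \<Rightarrow> 'a \<Rightarrow> bool) \<Rightarrow> ('a \<times> 'a) set \<Rightarrow> bool" where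
  "partial_matching X lt M \<longleftrightarrow>
     (\<forall>(a,b)\<in>M. covers X lt a b) \<and>
     (\<forall>p\<in>M. \<forall>q\<in>M. p \<noteq> q \<longrightarrow> {fst p, snd p} \<inter> {fst q, snd q} = {})"

definition acyclic_matching :: "'a set \<Rightarrow> ('a \<Rightarrow> 'a \<Rightarrow> bool) \<Rightarrow> ('a \<times> 'a) set \<Rightarrow> bool" where
  "acyclic_matching X lt M \<longleftrightarrow> partial_matching X lt M \<and>
     \<not> (\<exists>(t::nat) (a::nat \<Rightarrow> 'a) (b::nat \<Rightarrow> 'a). t \<ge> 2 \<and> inj_on b {..<t} \<and>
          (\<forall>i<t. (a i, b i) \<in> M \<and> lt (a i) (b (Suc i mod t))))"

definition critical :: "'a set \<Rightarrow> ('a \<times> 'a) set \<Rightarrow> 'a set" where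
  "critical X M = {x \<in> X. \<forall>p\<in>M. x \<noteq> fst p \<and> x \<noteq> snd p}"

definition stab1 :: "nat \<Rightarrow> (nat \<Rightarrow> nat) set" where
  "stab1 n = {\<sigma>. \<sigma> permutes {1..n} \<and> \<sigma> 1 = 1}"

definition act_simplex :: "(nat \<Rightarrow> nat) \<Rightarrow> simplex \<Rightarrow> simplex" where
  "act_simplex \<sigma> S = (\<lambda>P. (\<lambda>B. \<sigma> ` B) ` P) ` S"

end

theory Submission
  imports Defs "HOL-Library.Product_Lexorder"
begin

(*
  For a chain S let B(S), the flag block, be the largest block F containing 1 such that S has
  vertices in A whose blocks of 1 lie inside F and have every size 2, ..., |F| (B(S) = {1} if
  there are none). If |B(S)| < n - 1, a vertex v(S) outside A and comparable with all of S is
  obtained by splitting B(S) off the finest vertex of S whose block of 1 strictly contains B(S),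
  or as {B(S), [n] - B(S)} if there is none. Adding or removing v(S) changes neither B(S) nor
  the vertices above it, so toggling v(S) is a matching. A chain stays unmatched only if
  |B(S)| = n - 1, which makes it a complete chain in A (a member of C_n), or if it is the single
  vertex v(S), which is alpha_n. The pair (B(S), vertices above B(S)) grows lexicographically
  with S and is constant on matched pairs, so on a cycle all pivots coincide and the cycle
  collapses. All constructions only see the block of 1, so they commute with S_1 x S_{n-1}.
*)

section \<open>Matchings by toggling a vertex\<close>

definition toggle_matching :: "'a set set \<Rightarrow> ('a set \<Rightarrow> 'a) \<Rightarrow> ('a set \<times> 'a set) set" where
  "toggle_matching X v = {(a, b). a \<in> X \<and> b \<in> X \<and> v b \<in> b \<and> a = b - {v b} \<and> v a = v b}"

lemma toggle_matchingD:
  assumes "(a, b) \<in> toggle_matching X v"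
  shows "a \<in> X" "b \<in> X" "v b \<in> b" "a = b - {v b}" "v a = v b" "v a \<notin> a" "b = insert (v b) a"
  using assms unfolding toggle_matching_def by auto

lemma partial_matching_toggle_matching: "partial_matching X (\<subset>) (toggle_matching X v)"
  unfolding partial_matching_def
proof (intro conjI ballI impI)
  fix p assume "p \<in> toggle_matching X v"
  then obtain a b where p: "p = (a, b)" and ab: "(a, b) \<in> toggle_matching X v" by (cases p) auto
  note d = toggle_matchingD[OF ab]
  have "\<not> (\<exists>c. a \<subset> c \<and> c \<subset> b)"
    using d(3,4) by blast
  then show "case p of (a, b) \<Rightarrow> covers X (\<subset>) a b"
    using p d unfolding covers_def by auto
next
  fix p q assume "p \<in> toggle_matching X v" "q \<in> toggle_matching X v" "p \<noteq> q"
  then show "{fst p, snd p} \<inter> {fst q, snd q} = {}"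
    unfolding toggle_matching_def by auto
qed

lemma cyclic_chain_constant:
  fixes f :: "nat \<Rightarrow> 'a::order"
  assumes t: "0 < t" and step: "\<forall>i<t. f i \<le> f (Suc i mod t)"
  shows "\<forall>i<t. f i = f 0"
proof -
  have up: "f j \<le> f (j + k)" if "j + k < t" for j k
    using that
  proof (induction k)
    case (Suc k)
    then have "f (j + k) \<le> f (Suc (j + k))"
      using step by (metis Suc_lessD add_Suc_right mod_less)
    with Suc show ?case by simp
  qed simp
  have "f (t - 1) \<le> f 0"
    using step[rule_format, of "t - 1"] t by simp
  moreover have "f 0 \<le> f i" "f i \<le> f (t - 1)" if "i < t" for i
    using up[of 0 i] up[of i "t - 1 - i"] that by simp_all
  ultimately show ?thesis
    by (meson order.antisym order.trans)
qed

lemma acyclic_toggle_matching: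
  fixes key :: "'a set \<Rightarrow> 'k::order"
  assumes key_mono: "\<And>a b. a \<in> X \<Longrightarrow> b \<in> X \<Longrightarrow> a \<subseteq> b \<Longrightarrow> key a \<le> key b"
    and key_matched: "\<And>a b. (a, b) \<in> toggle_matching X v \<Longrightarrow> key a = key b"
    and v_key: "\<And>a b. key a = key b \<Longrightarrow> v a = v b"
  shows "acyclic_matching X (\<subset>) (toggle_matching X v)"
  unfolding acyclic_matching_def
proof (intro conjI notI partial_matching_toggle_matching)
  assume "\<exists>(t::nat) a b. 2 \<le> t \<and> inj_on b {..<t} \<and>
            (\<forall>i<t. (a i, b i) \<in> toggle_matching X v \<and> a i \<subset> b (Suc i mod t))"
  then obtain t a b where t: "2 \<le> t" and inj: "inj_on b {..<t}"
    and cyc: "\<And>i. i < t \<Longrightarrow> (a i, b i) \<in> toggle_matching X v \<and> a i \<subset> b (Suc i mod t)"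
    by blast
  have t0: "0 < t" and next_lt: "\<And>i. Suc i mod t < t" using t by simp_all
  note match = toggle_matchingD[OF conjunct1[OF cyc]]
  have "\<forall>i<t. key (b i) \<le> key (b (Suc i mod t))"
  proof (intro allI impI)
    fix i assume i: "i < t"
    have "key (b i) = key (a i)"
      using key_matched[OF conjunct1[OF cyc[OF i]]] by simp
    also have "\<dots> \<le> key (b (Suc i mod t))"
      using key_mono[OF match(1)[OF i] match(2)[OF next_lt]] cyc[OF i] by blast
    finally show "key (b i) \<le> key (b (Suc i mod t))" .
  qed
  then have "\<forall>i<t. key (b i) = key (b 0)"
    by (rule cyclic_chain_constant[OF t0])
  then have v_const: "v (b i) = v (b 0)" if "i < t" for i
    using that \<open>\<forall>i<t. key (b i) = key (b 0)\<close> v_key by blast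
  have "\<forall>i<t. b i \<le> b (Suc i mod t)"
  proof (intro allI impI)
    fix i assume i: "i < t"
    have "v (b 0) \<in> b (Suc i mod t)"
      using match(3)[OF next_lt] v_const[OF next_lt] by simp
    moreover have "a i \<subseteq> b (Suc i mod t)"
      using cyc[OF i] by blast
    ultimately have "insert (v (b i)) (a i) \<subseteq> b (Suc i mod t)"
      unfolding v_const[OF i] by blast
    then show "b i \<le> b (Suc i mod t)"
      using match(7)[OF i] by simp
  qed
  then have "\<forall>i<t. b i = b 0"
    by (rule cyclic_chain_constant[OF t0])
  moreover have "1 < t"
    using t by simp
  ultimately have "b 1 = b 0"
    by blast
  then show False
    using inj_onD[OF inj, of 1 0] t by simp
qed

lemma toggle_matching_equivariant:
  assumes g: "inj g" and X: "\<And>S. S \<in> X \<Longrightarrow> g ` S \<in> X"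
    and v: "\<And>S. S \<in> X \<Longrightarrow> v (g ` S) = g (v S)"
    and ab: "(a, b) \<in> toggle_matching X v"
  shows "(g ` a, g ` b) \<in> toggle_matching X v"
proof -
  note d = toggle_matchingD[OF ab]
  have "g ` a = g ` b - {g (v b)}"
    using d(4) image_set_diff[OF g] by simp
  moreover have "v (g ` a) = v (g ` b)"
    using v[OF d(1)] v[OF d(2)] d(5) by simp
  ultimately show ?thesis
    using d(3) X[OF d(1)] X[OF d(2)] v[OF d(2)] unfolding toggle_matching_def by simp
qed

lemma critical_toggle_matching:
  "critical X (toggle_matching X v) =
     {x \<in> X. (x - {v x}, x) \<notin> toggle_matching X v \<and> (x, insert (v x) x) \<notin> toggle_matching X v}"
proof -
  have "(\<exists>p\<in>toggle_matching X v. x = fst p \<or> x = snd p) \<longleftrightarrow>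
      (x - {v x}, x) \<in> toggle_matching X v \<or> (x, insert (v x) x) \<in> toggle_matching X v" for x
  proof
    assume "\<exists>p\<in>toggle_matching X v. x = fst p \<or> x = snd p"
    then obtain a b where ab: "(a, b) \<in> toggle_matching X v" "x = a \<or> x = b" by auto
    note d = toggle_matchingD[OF ab(1)]
    show "(x - {v x}, x) \<in> toggle_matching X v \<or> (x, insert (v x) x) \<in> toggle_matching X v"
      using ab(2)
    proof
      assume "x = a"
      then show ?thesis using ab(1) d(5,7) by simp
    qed (use ab(1) d(4) in simp)
  qed force
  then show ?thesis
    unfolding critical_def by blast
qed

section \<open>Partitions and the block containing 1\<close>

definition one_block :: "partition \<Rightarrow> nat set" where
  "one_block P = \<Union>{B\<in>P. 1 \<in> B}"

lemma refines_reflexive: "refines P P"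
  unfolding refines_def by auto

lemma refines_transitive: "refines P Q \<Longrightarrow> refines Q R \<Longrightarrow> refines P R"
  unfolding refines_def by (meson order_trans)

lemma refines_antisymmetric:
  "partition_on X P \<Longrightarrow> partition_on X Q \<Longrightarrow> refines P Q \<Longrightarrow> refines Q P \<Longrightarrow> P = Q"
  using Disjoint_Sets.refines_asym[of X P Q] unfolding Disjoint_Sets.refines_def refines_def by blast

lemma partition_on_block_eq:
  "partition_on X P \<Longrightarrow> D \<in> P \<Longrightarrow> E \<in> P \<Longrightarrow> x \<in> D \<Longrightarrow> x \<in> E \<Longrightarrow> D = E"
  by (meson disjoint_iff disjointD partition_onD2)

lemma partition_on_block_ex: "partition_on X P \<Longrightarrow> x \<in> X \<Longrightarrow> \<exists>D\<in>P. x \<in> D"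
  using partition_onD1 by blast

lemma one_block_eq: "partition_on X P \<Longrightarrow> D \<in> P \<Longrightarrow> 1 \<in> D \<Longrightarrow> one_block P = D"
  unfolding one_block_def using partition_on_block_eq[of X P D] by blast

lemma one_block_mem:
  assumes "partition_on X P" "1 \<in> X"
  shows "one_block P \<in> P" "1 \<in> one_block P"
  using partition_on_block_ex[OF assms] one_block_eq[OF assms(1)] by auto

lemma one_block_mono:
  assumes "partition_on X P" "partition_on X Q" "1 \<in> X" "refines P Q"
  shows "one_block P \<subseteq> one_block Q"
proof -
  obtain C where "C \<in> Q" "one_block P \<subseteq> C"
    using assms(4) one_block_mem[OF assms(1,3)] unfolding refines_def by blast
  then show ?thesis
    using one_block_eq[OF assms(2)] one_block_mem[OF assms(1,3)] by blast
qed

lemma one_block_eq_space: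
  assumes "partition_on X P" "1 \<in> X" "one_block P = X"
  shows "P = {X}"
proof -
  have "X \<in> P" using one_block_mem[OF assms(1,2)] assms(3) by simp
  moreover have "D = X" if D: "D \<in> P" for D
  proof -
    obtain x where "x \<in> D"
      using partition_onD3[OF assms(1)] D by (metis ex_in_conv)
    moreover have "D \<subseteq> X"
      using partition_onD1[OF assms(1)] D by blast
    ultimately show ?thesis
      using partition_on_block_eq[OF assms(1) D \<open>X \<in> P\<close>] by blast
  qed
  ultimately show ?thesis by blast
qed

lemma partition_on_card_one_blocks:
  "partition_on X P \<Longrightarrow> \<forall>D\<in>P. card D = 1 \<Longrightarrow> P = (\<lambda>x. {x}) ` X"
  by (fastforce simp: card_1_singleton_iff dest: partition_onD1 partition_on_block_ex)

lemma partition_on_split_block: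
  assumes P: "partition_on X P" and D: "D \<in> P" and B: "B \<noteq> {}" "B \<subset> D"
  shows "partition_on X (insert B (insert (D - B) (P - {D})))"
proof (rule partition_onI)
  show "\<Union>(insert B (insert (D - B) (P - {D}))) = X"
    using partition_onD1[OF P] D B by blast
  show "{} \<notin> insert B (insert (D - B) (P - {D}))"
    using partition_onD3[OF P] B by blast
next
  fix p q assume "p \<in> insert B (insert (D - B) (P - {D}))"
    "q \<in> insert B (insert (D - B) (P - {D}))" "p \<noteq> q"
  moreover have "E \<inter> D = {}" if "E \<in> P" "E \<noteq> D" for E
    using partition_on_block_eq[OF P that(1) D] that(2) by blast
  moreover have "E \<inter> F = {}" if "E \<in> P" "F \<in> P" "E \<noteq> F" for E F
    using partition_on_block_eq[OF P that(1,2)] that(3) by blast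
  ultimately show "disjnt p q"
    unfolding disjnt_def using B(2) by blast
qed

lemma finite_refines_chain_has_least:
  assumes "finite X" "X \<noteq> {}" "\<forall>P\<in>X. \<forall>Q\<in>X. refines P Q \<or> refines Q P"
  shows "\<exists>m\<in>X. \<forall>Q\<in>X. refines m Q"
  using assms
proof (induction X rule: finite_ne_induct)
  case (insert x F)
  then obtain m where m: "m \<in> F" "\<forall>y\<in>F. refines m y" by auto
  show ?case
  proof (cases "refines m x")
    case False
    then have "refines x m" using insert.prems m by auto
    then show ?thesis using m refines_reflexive refines_transitive[of x m] by auto
  qed (use m in auto)
qed (auto simp: refines_reflexive)

lemma card_eq_1_subset: "D \<noteq> {} \<Longrightarrow> D \<subseteq> X \<Longrightarrow> card X = 1 \<Longrightarrow> card D = 1"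
  by (metis card_1_singletonE subset_singletonD)

section \<open>The proper part of the partition lattice\<close>

locale partition_complex =
  fixes n :: nat
  assumes three_le_n: "3 \<le> n"
begin

lemma one_in_ground: "(1::nat) \<in> {1..n}"
  using three_le_n by simp

lemma Pi_bar_partition: "P \<in> Pi_bar n \<Longrightarrow> partition_on {1..n} P"
  unfolding Pi_bar_def by auto

lemma one_block_Pi_bar:
  assumes "P \<in> Pi_bar n"
  shows "one_block P \<in> P" "1 \<in> one_block P"
  using one_block_mem[OF Pi_bar_partition[OF assms] one_in_ground] by auto

lemma one_block_Pi_bar_eq: "P \<in> Pi_bar n \<Longrightarrow> D \<in> P \<Longrightarrow> 1 \<in> D \<Longrightarrow> one_block P = D"
  using one_block_eq[OF Pi_bar_partition] .

lemma Pi_bar_block_subset: "P \<in> Pi_bar n \<Longrightarrow> D \<in> P \<Longrightarrow> D \<subseteq> {1..n}"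
  using partition_onD1[OF Pi_bar_partition] by blast

lemma Pi_bar_block_ne: "P \<in> Pi_bar n \<Longrightarrow> D \<in> P \<Longrightarrow> D \<noteq> {}"
  using partition_onD3[OF Pi_bar_partition] by blast

lemma Pi_bar_blocks_disjoint:
  "P \<in> Pi_bar n \<Longrightarrow> D \<in> P \<Longrightarrow> E \<in> P \<Longrightarrow> D \<noteq> E \<Longrightarrow> D \<inter> E = {}"
  using partition_on_block_eq[OF Pi_bar_partition] by blast

lemma one_block_psubset:
  assumes P: "P \<in> Pi_bar n"
  shows "one_block P \<subset> {1..n}"
proof -
  have "one_block P \<noteq> {1..n}"
    using one_block_eq_space[OF Pi_bar_partition[OF P] one_in_ground] P unfolding Pi_bar_def by blast
  then show ?thesis
    using Pi_bar_block_subset[OF P one_block_Pi_bar(1)[OF P]] by blast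
qed

lemma finite_one_block: "P \<in> Pi_bar n \<Longrightarrow> finite (one_block P)"
  using one_block_psubset finite_subset by blast

lemma card_one_block_less: "P \<in> Pi_bar n \<Longrightarrow> card (one_block P) < n"
  using psubset_card_mono[OF _ one_block_psubset] by fastforce

lemma one_block_mono_Pi_bar:
  "P \<in> Pi_bar n \<Longrightarrow> Q \<in> Pi_bar n \<Longrightarrow> refines P Q \<Longrightarrow> one_block P \<subseteq> one_block Q"
  using one_block_mono[OF Pi_bar_partition Pi_bar_partition one_in_ground] .

lemma A_set_Pi_bar: "P \<in> A_set n \<Longrightarrow> P \<in> Pi_bar n"
  unfolding A_set_def by auto

lemma A_set_singleton_block: "P \<in> A_set n \<Longrightarrow> D \<in> P \<Longrightarrow> 1 \<notin> D \<Longrightarrow> card D = 1"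
  unfolding A_set_def by auto

lemma A_setI: "P \<in> Pi_bar n \<Longrightarrow> (\<And>D. D \<in> P \<Longrightarrow> 1 \<notin> D \<Longrightarrow> card D = 1) \<Longrightarrow> P \<in> A_set n"
  unfolding A_set_def by auto

lemma two_le_card_one_block:
  assumes P: "P \<in> A_set n"
  shows "2 \<le> card (one_block P)"
proof (rule ccontr)
  assume "\<not> 2 \<le> card (one_block P)"
  moreover have "one_block P \<noteq> {}" "finite (one_block P)"
    using one_block_Pi_bar[OF A_set_Pi_bar[OF P]] finite_one_block[OF A_set_Pi_bar[OF P]] by auto
  ultimately have "card (one_block P) = 1"
    using card_gt_0_iff[of "one_block P"] by linarith
  then have "\<forall>D\<in>P. card D = 1"
    using A_set_singleton_block[OF P] one_block_Pi_bar_eq[OF A_set_Pi_bar[OF P]] by metis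
  then show False
    using partition_on_card_one_blocks[OF Pi_bar_partition] A_set_Pi_bar[OF P]
    unfolding Pi_bar_def by blast
qed

lemma A_set_eq_if_one_block_eq:
  assumes P: "P \<in> A_set n" and Q: "Q \<in> A_set n" and eq: "one_block P = one_block Q"
  shows "P = Q"
proof -
  have "P' \<subseteq> Q'" if P': "P' \<in> A_set n" and Q': "Q' \<in> A_set n"
    and eq': "one_block P' = one_block Q'" for P' Q'
  proof
    fix D assume D: "D \<in> P'"
    have pP: "P' \<in> Pi_bar n" and pQ: "Q' \<in> Pi_bar n" using A_set_Pi_bar P' Q' by auto
    show "D \<in> Q'"
    proof (cases "1 \<in> D")
      case True
      then show ?thesis using one_block_Pi_bar_eq[OF pP D] eq' one_block_Pi_bar[OF pQ] by auto
    next
      case False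
      then obtain d where d: "D = {d}"
        using A_set_singleton_block[OF P' D] card_1_singletonE by blast
      then obtain E where E: "E \<in> Q'" "d \<in> E"
        using Pi_bar_block_subset[OF pP D] partition_on_block_ex[OF Pi_bar_partition[OF pQ]] by blast
      have "d \<notin> one_block Q'"
        using Pi_bar_blocks_disjoint[OF pP D one_block_Pi_bar(1)[OF pP]] one_block_Pi_bar(2)[OF pP]
          False d eq' by auto
      then have "1 \<notin> E"
        using one_block_Pi_bar_eq[OF pQ E(1)] E(2) by auto
      then have "E = {d}"
        using A_set_singleton_block[OF Q' E(1)] E(2) by (metis card_1_singletonE singletonD)
      then show ?thesis using E d by simp
    qed
  qed
  then show ?thesis using P Q eq by blast
qed

lemma simplices_Pi_bar: "S \<in> simplices n \<Longrightarrow> P \<in> S \<Longrightarrow> P \<in> Pi_bar n"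
  unfolding simplices_def by auto

lemma simplices_finite: "S \<in> simplices n \<Longrightarrow> finite S"
  unfolding simplices_def by auto

lemma simplices_comparable: "S \<in> simplices n \<Longrightarrow> P \<in> S \<Longrightarrow> Q \<in> S \<Longrightarrow> refines P Q \<or> refines Q P"
  unfolding simplices_def by auto

lemma simplices_subset: "S \<in> simplices n \<Longrightarrow> T \<subseteq> S \<Longrightarrow> T \<noteq> {} \<Longrightarrow> T \<in> simplices n"
  unfolding simplices_def using finite_subset by blast

lemma simplices_insert:
  "S \<in> simplices n \<Longrightarrow> v \<in> Pi_bar n \<Longrightarrow> \<forall>P\<in>S. refines P v \<or> refines v P \<Longrightarrow> insert v S \<in> simplices n"
  unfolding simplices_def using refines_reflexive by auto

lemma empty_notin_simplex: "S \<in> simplices n \<Longrightarrow> {} \<notin> S"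
  using simplices_Pi_bar Pi_bar_partition partition_onD1 one_in_ground by fastforce

lemma one_blocks_comparable:
  assumes S: "S \<in> simplices n" and P: "P \<in> S" and Q: "Q \<in> S"
  shows "one_block P \<subseteq> one_block Q \<or> one_block Q \<subseteq> one_block P"
  using simplices_comparable[OF S P Q]
    one_block_mono_Pi_bar[OF simplices_Pi_bar[OF S P] simplices_Pi_bar[OF S Q]]
    one_block_mono_Pi_bar[OF simplices_Pi_bar[OF S Q] simplices_Pi_bar[OF S P]] by blast

lemma one_block_subset_if_card_le:
  assumes S: "S \<in> simplices n" and P: "P \<in> S" and Q: "Q \<in> S"
    and le: "card (one_block Q) \<le> card (one_block P)"
  shows "one_block Q \<subseteq> one_block P"
proof (rule ccontr)
  assume "\<not> one_block Q \<subseteq> one_block P"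
  then have "one_block P \<subset> one_block Q"
    using one_blocks_comparable[OF S P Q] by blast
  from psubset_card_mono[OF finite_one_block[OF simplices_Pi_bar[OF S Q]] this] le
  show False by simp
qed

lemma refines_if_card_one_block_less:
  assumes S: "S \<in> simplices n" and P: "P \<in> S" and Q: "Q \<in> S"
    and less: "card (one_block P) < card (one_block Q)"
  shows "refines P Q"
proof (rule ccontr)
  assume "\<not> refines P Q"
  then have "one_block Q \<subseteq> one_block P"
    using simplices_comparable[OF S P Q]
      one_block_mono_Pi_bar[OF simplices_Pi_bar[OF S Q] simplices_Pi_bar[OF S P]] by blast
  from card_mono[OF finite_one_block[OF simplices_Pi_bar[OF S P]] this] less
  show False by simp
qed

lemma card_one_block_inj_on_A_chain:
  assumes S: "S \<in> simplices n" and SA: "S \<subseteq> A_set n"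
  shows "inj_on (\<lambda>P. card (one_block P)) S"
proof (rule inj_onI)
  fix P Q assume P: "P \<in> S" and Q: "Q \<in> S" and eq: "card (one_block P) = card (one_block Q)"
  then have "one_block P = one_block Q"
    using one_block_subset_if_card_le[OF S] by (metis order.refl subset_antisym)
  then show "P = Q"
    using A_set_eq_if_one_block_eq SA P Q by blast
qed

lemma card_one_block_A_chain_range:
  assumes S: "S \<in> simplices n" and SA: "S \<subseteq> A_set n"
  shows "(\<lambda>P. card (one_block P)) ` S \<subseteq> {2..n-1}"
  using two_le_card_one_block card_one_block_less simplices_Pi_bar[OF S] SA
  by (fastforce simp: less_eq_Suc_le)

end

section \<open>Flags of A-vertices in a chain\<close>

definition flag_vertices :: "nat \<Rightarrow> simplex \<Rightarrow> partition set" where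
  "flag_vertices n S = {P \<in> S \<inter> A_set n. \<forall>k\<in>{2..card (one_block P)}.
     \<exists>Q\<in>S \<inter> A_set n. card (one_block Q) = k \<and> one_block Q \<subseteq> one_block P}"

definition flag_block :: "nat \<Rightarrow> simplex \<Rightarrow> nat set" where
  "flag_block n S = insert 1 (\<Union>(one_block ` flag_vertices n S))"

definition above_flag :: "nat \<Rightarrow> simplex \<Rightarrow> partition set" where
  "above_flag n S = {P \<in> S. flag_block n S \<subset> one_block P}"

lemma flag_vertices_subset: "flag_vertices n S \<subseteq> S \<inter> A_set n"
  unfolding flag_vertices_def by auto

lemma flag_vertices_mono: "S \<subseteq> T \<Longrightarrow> flag_vertices n S \<subseteq> flag_vertices n T"
  unfolding flag_vertices_def by blast

lemma flag_block_mono: "S \<subseteq> T \<Longrightarrow> flag_block n S \<subseteq> flag_block n T"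
  unfolding flag_block_def using flag_vertices_mono by blast

lemma flag_block_cong: "S \<inter> A_set n = T \<inter> A_set n \<Longrightarrow> flag_block n S = flag_block n T"
  unfolding flag_block_def flag_vertices_def by simp

lemma above_flag_mono:
  "S \<subseteq> T \<Longrightarrow> flag_block n S = flag_block n T \<Longrightarrow> above_flag n S \<subseteq> above_flag n T"
  unfolding above_flag_def by auto

lemma flag_block_no_flag: "flag_vertices n S = {} \<Longrightarrow> flag_block n S = {1}"
  unfolding flag_block_def by simp

lemma one_in_flag_block: "1 \<in> flag_block n S"
  unfolding flag_block_def by simp

context partition_complex
begin

lemma flag_block_attained:
  assumes S: "S \<in> simplices n" and ne: "flag_vertices n S \<noteq> {}"
  shows "\<exists>F\<in>flag_vertices n S. one_block F = flag_block n S"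
proof -
  have sub: "flag_vertices n S \<subseteq> S"
    using flag_vertices_subset by blast
  have fin: "finite (one_block ` flag_vertices n S)"
    using finite_subset[OF sub simplices_finite[OF S]] by blast
  have "subset.chain UNIV (one_block ` flag_vertices n S)"
    unfolding subset_chain_def using one_blocks_comparable[OF S] sub by blast
  then have "\<Union>(one_block ` flag_vertices n S) \<in> one_block ` flag_vertices n S"
    using Union_in_chain[OF fin] ne by blast
  then obtain F where F: "F \<in> flag_vertices n S" "one_block F = \<Union>(one_block ` flag_vertices n S)"
    by (metis imageE)
  moreover have "1 \<in> one_block F"
    using one_block_Pi_bar(2)[OF simplices_Pi_bar[OF S]] F(1) sub by blast
  ultimately show ?thesis
    unfolding flag_block_def by (metis insert_absorb)
qed

lemma flag_block_subset: "S \<in> simplices n \<Longrightarrow> flag_block n S \<subseteq> {1..n}"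
  unfolding flag_block_def using one_in_ground one_block_psubset simplices_Pi_bar flag_vertices_subset
  by blast

lemma finite_flag_block: "S \<in> simplices n \<Longrightarrow> finite (flag_block n S)"
  using flag_block_subset finite_subset by blast

lemma flag_vertex_one_block_subset: "P \<in> flag_vertices n S \<Longrightarrow> one_block P \<subseteq> flag_block n S"
  unfolding flag_block_def by blast

lemma no_A_vertex_extends_flag:
  assumes S: "S \<in> simplices n" and h: "h \<in> S" "h \<in> A_set n"
    and sub: "flag_block n S \<subseteq> one_block h"
    and card: "card (one_block h) = card (flag_block n S) + 1"
  shows False
proof -
  have "h \<in> flag_vertices n S"
    unfolding flag_vertices_def
  proof (intro CollectI conjI ballI)
    show "h \<in> S \<inter> A_set n" using h by simp
    fix k assume k: "k \<in> {2..card (one_block h)}"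
    show "\<exists>Q\<in>S \<inter> A_set n. card (one_block Q) = k \<and> one_block Q \<subseteq> one_block h"
    proof (cases "k = card (one_block h)")
      case False
      then have k': "2 \<le> k" "k \<le> card (flag_block n S)" using k card by auto
      then have "flag_vertices n S \<noteq> {}" using flag_block_no_flag by fastforce
      then obtain F where F: "F \<in> flag_vertices n S" "one_block F = flag_block n S"
        using flag_block_attained[OF S] by blast
      moreover have "k \<in> {2..card (one_block F)}"
        using k' F(2) by simp
      ultimately obtain Q where "Q \<in> S \<inter> A_set n" "card (one_block Q) = k" "one_block Q \<subseteq> one_block F"
        unfolding flag_vertices_def by blast
      then show ?thesis using F(2) sub by blast
    qed (use h in auto)
  qed
  then have "card (one_block h) \<le> card (flag_block n S)"
    using card_mono[OF finite_flag_block[OF S] flag_vertex_one_block_subset] by blast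
  then show False using card by simp
qed

lemma blocks_split_by_flag_block:
  assumes S: "S \<in> simplices n" and P: "P \<in> S" and not_above: "\<not> flag_block n S \<subset> one_block P"
    and D: "D \<in> P"
  shows "D \<subseteq> flag_block n S \<or> D \<inter> flag_block n S = {}"
proof -
  have pP: "P \<in> Pi_bar n"
    using simplices_Pi_bar[OF S P] .
  have one_block_split: "D \<subseteq> one_block P \<or> D \<inter> one_block P = {}"
    using Pi_bar_blocks_disjoint[OF pP D one_block_Pi_bar(1)[OF pP]] by (cases "D = one_block P") simp_all
  show ?thesis
  proof (cases "flag_vertices n S = {}")
    case True
    moreover have "{1} \<subseteq> one_block P"
      using one_block_Pi_bar(2)[OF pP] by simp
    ultimately have "one_block P = flag_block n S"
      using flag_block_no_flag[OF True] not_above unfolding psubset_eq by simp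
    then show ?thesis
      using one_block_split by simp
  next
    case False
    then obtain F where F: "F \<in> flag_vertices n S" "one_block F = flag_block n S"
      using flag_block_attained[OF S] by blast
    have FS: "F \<in> S"
      using F(1) flag_vertices_subset by blast
    have pF: "F \<in> Pi_bar n"
      using simplices_Pi_bar[OF S FS] .
    show ?thesis
    proof (cases "refines P F")
      case True
      then obtain E where E: "E \<in> F" "D \<subseteq> E"
        using D unfolding refines_def by blast
      have "E \<subseteq> one_block F \<or> E \<inter> one_block F = {}"
        using Pi_bar_blocks_disjoint[OF pF E(1) one_block_Pi_bar(1)[OF pF]] by blast
      then show ?thesis
        using E(2) F(2) by blast
    next
      case False
      then have "one_block F \<subseteq> one_block P"
        using simplices_comparable[OF S P FS] one_block_mono_Pi_bar[OF pF pP] by blast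
      then have "one_block P = flag_block n S"
        using not_above F(2) by blast
      then show ?thesis
        using one_block_split by simp
    qed
  qed
qed

end

section \<open>The pivot vertex\<close>

definition finest :: "partition set \<Rightarrow> partition" where
  "finest X = (THE P. P \<in> X \<and> (\<forall>Q\<in>X. refines P Q))"

definition two_block :: "nat \<Rightarrow> nat set \<Rightarrow> partition" where
  "two_block n B = {B, {1..n} - B}"

definition split_one_block :: "nat set \<Rightarrow> partition \<Rightarrow> partition" where
  "split_one_block B P = insert B (insert (one_block P - B) (P - {one_block P}))"

(* On chains with |B(S)| >= n - 1 the pivot is the junk value {}, which is never a vertex. *)
definition pivot :: "nat \<Rightarrow> simplex \<Rightarrow> partition" where
  "pivot n S = (if n \<le> card (flag_block n S) + 1 then {}
     else if above_flag n S = {} then two_block n (flag_block n S)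
     else split_one_block (flag_block n S) (finest (above_flag n S)))"

lemma pivot_cong:
  "flag_block n S = flag_block n T \<Longrightarrow> above_flag n S = above_flag n T \<Longrightarrow> pivot n S = pivot n T"
  unfolding pivot_def by simp

abbreviation pivot_matching :: "nat \<Rightarrow> (simplex \<times> simplex) set" where
  "pivot_matching n \<equiv> toggle_matching (simplices n) (pivot n)"

lemma refines_split_one_block:
  assumes split: "\<forall>D\<in>P. D \<subseteq> B \<or> D \<inter> B = {}" and r: "refines P h"
  shows "refines P (split_one_block B h)"
  unfolding refines_def
proof
  fix D assume D: "D \<in> P"
  then obtain E where E: "E \<in> h" "D \<subseteq> E" using r unfolding refines_def by blast
  then show "\<exists>C\<in>split_one_block B h. D \<subseteq> C"
    using split D unfolding split_one_block_def by (cases "E = one_block h") auto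
qed

lemma split_one_block_refines: "B \<subseteq> one_block h \<Longrightarrow> one_block h \<in> h \<Longrightarrow> refines (split_one_block B h) h"
  unfolding refines_def split_one_block_def by auto

context partition_complex
begin

lemma finest_eq:
  assumes S: "S \<in> simplices n" and X: "X \<subseteq> S" and m: "m \<in> X" "\<forall>Q\<in>X. refines m Q"
  shows "finest X = m"
  unfolding finest_def
proof (rule the_equality)
  fix P assume P: "P \<in> X \<and> (\<forall>Q\<in>X. refines P Q)"
  have "P \<in> Pi_bar n" "m \<in> Pi_bar n"
    using P m(1) X simplices_Pi_bar[OF S] by auto
  then show "P = m"
    using refines_antisymmetric[OF Pi_bar_partition Pi_bar_partition] P m by blast
qed (use m in blast)

lemma finest_mem:
  assumes S: "S \<in> simplices n" and X: "X \<subseteq> S" "X \<noteq> {}"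
  shows "finest X \<in> X" "\<forall>Q\<in>X. refines (finest X) Q"
proof -
  have "\<forall>P\<in>X. \<forall>Q\<in>X. refines P Q \<or> refines Q P"
    using simplices_comparable[OF S] X(1) by blast
  then obtain m where "m \<in> X" "\<forall>Q\<in>X. refines m Q"
    using finite_refines_chain_has_least[OF finite_subset[OF X(1) simplices_finite[OF S]] X(2)] by blast
  with finest_eq[OF S X(1) this] show "finest X \<in> X" "\<forall>Q\<in>X. refines (finest X) Q"
    by simp_all
qed

lemma two_block_Pi_bar:
  assumes B: "1 \<in> B" "B \<subseteq> {1..n}" "card B + 1 < n"
  shows "two_block n B \<in> Pi_bar n" "two_block n B \<notin> A_set n" "one_block (two_block n B) = B"
proof -
  have "card ({1..n} - B) = n - card B"
    using card_Diff_subset[OF finite_subset[OF B(2)] B(2)] by simp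
  then have two: "2 \<le> card ({1..n} - B)"
    using B(3) by simp
  then have "{1..n} - B \<noteq> {}"
    by (metis card.empty not_numeral_le_zero)
  then have part: "partition_on {1..n} (two_block n B)"
    unfolding two_block_def using B by (intro partition_onI) (auto simp: disjnt_def)
  have "B \<noteq> {1..n}" using B(3) by auto
  moreover have "{1..n} - B \<notin> (\<lambda>i. {i}) ` {1..n}" using two by (auto simp del: One_nat_def)
  ultimately show P: "two_block n B \<in> Pi_bar n"
    unfolding Pi_bar_def two_block_def using part[unfolded two_block_def] by auto
  show "two_block n B \<notin> A_set n"
  proof
    assume "two_block n B \<in> A_set n"
    then have "card ({1..n} - B) = 1"
      using A_set_singleton_block B(1) unfolding two_block_def by blast
    then show False
      using two by simp
  qed
  show "one_block (two_block n B) = B"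
    using one_block_Pi_bar_eq[OF P, of B] B(1) unfolding two_block_def by simp
qed

lemma refines_two_block:
  assumes P: "P \<in> Pi_bar n" and split: "\<forall>D\<in>P. D \<subseteq> B \<or> D \<inter> B = {}"
  shows "refines P (two_block n B)"
  unfolding refines_def
proof
  fix D assume D: "D \<in> P"
  then have "D \<subseteq> B \<or> D \<subseteq> {1..n} - B"
    using split Pi_bar_block_subset[OF P D] by blast
  then show "\<exists>C\<in>two_block n B. D \<subseteq> C"
    unfolding two_block_def by blast
qed

lemma split_one_block_partition:
  assumes h: "h \<in> Pi_bar n" and B: "1 \<in> B" "B \<subset> one_block h"
  shows "partition_on {1..n} (split_one_block B h)" "one_block (split_one_block B h) = B"
proof -
  show part: "partition_on {1..n} (split_one_block B h)"
    unfolding split_one_block_def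
    using partition_on_split_block[OF Pi_bar_partition[OF h] one_block_Pi_bar(1)[OF h]] B by blast
  show "one_block (split_one_block B h) = B"
    using one_block_eq[OF part, of B] B(1) unfolding split_one_block_def by simp
qed

lemma split_above_flag_has_large_block:
  assumes S: "S \<in> simplices n" and h: "h \<in> S" and above: "flag_block n S \<subset> one_block h"
  shows "\<exists>D\<in>split_one_block (flag_block n S) h. 1 \<notin> D \<and> card D \<noteq> 1"
proof (rule ccontr)
  \<comment> \<open>otherwise \<open>h\<close> would be an A-vertex whose block of 1 adds one element to the flag block\<close>
  let ?B = "flag_block n S"
  assume "\<not> ?thesis"
  then have small: "\<And>D. D \<in> split_one_block ?B h \<Longrightarrow> 1 \<notin> D \<Longrightarrow> card D = 1"
    by blast
  have ph: "h \<in> Pi_bar n"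
    using simplices_Pi_bar[OF S h] .
  have "card (one_block h - ?B) = 1"
    using small[of "one_block h - ?B"] one_in_flag_block unfolding split_one_block_def by blast
  moreover have "card (one_block h) = card ?B + card (one_block h - ?B)"
    using card_Diff_subset[OF finite_flag_block[OF S]] above card_mono[OF finite_one_block[OF ph]]
    by (metis le_add_diff_inverse psubset_imp_subset)
  moreover have hA: "h \<in> A_set n"
  proof (rule A_setI[OF ph])
    fix D assume "D \<in> h" "1 \<notin> D"
    moreover then have "D \<noteq> one_block h"
      using one_block_Pi_bar(2)[OF ph] by blast
    ultimately show "card D = 1"
      using small unfolding split_one_block_def by blast
  qed
  ultimately show False
    using no_A_vertex_extends_flag[OF S h hA psubset_imp_subset[OF above]] by simp
qed

lemma pivot_without_above_flag:
  assumes S: "S \<in> simplices n" and not_full: "\<not> n \<le> card (flag_block n S) + 1"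
    and no_above: "above_flag n S = {}"
  shows "pivot n S \<in> Pi_bar n" "pivot n S \<notin> A_set n" "one_block (pivot n S) = flag_block n S"
    "\<forall>P\<in>S. refines P (pivot n S)"
proof -
  have pivot: "pivot n S = two_block n (flag_block n S)"
    unfolding pivot_def using not_full no_above by simp
  have "1 \<in> flag_block n S" "flag_block n S \<subseteq> {1..n}" "card (flag_block n S) + 1 < n"
    using one_in_flag_block flag_block_subset[OF S] not_full by auto
  then show "pivot n S \<in> Pi_bar n" "pivot n S \<notin> A_set n" "one_block (pivot n S) = flag_block n S"
    unfolding pivot by (rule two_block_Pi_bar)+
  show "\<forall>P\<in>S. refines P (pivot n S)"
  proof
    fix P assume P: "P \<in> S"
    then have "\<not> flag_block n S \<subset> one_block P"
      using no_above unfolding above_flag_def by blast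
    then show "refines P (pivot n S)"
      unfolding pivot using refines_two_block[OF simplices_Pi_bar[OF S P]]
        blocks_split_by_flag_block[OF S P] by blast
  qed
qed

lemma split_finest_above_flag_comparable:
  assumes S: "S \<in> simplices n" and h: "h \<in> above_flag n S"
    and least: "\<forall>Q\<in>above_flag n S. refines h Q" and P: "P \<in> S"
  shows "refines P (split_one_block (flag_block n S) h) \<or> refines (split_one_block (flag_block n S) h) P"
proof -
  let ?B = "flag_block n S"
  have hS: "h \<in> S" and Bh: "?B \<subset> one_block h"
    using h unfolding above_flag_def by auto
  have ph: "h \<in> Pi_bar n"
    using simplices_Pi_bar[OF S hS] .
  show ?thesis
  proof (cases "P \<in> above_flag n S")
    case True
    then have "refines h P"
      using least by blast
    moreover have "refines (split_one_block ?B h) h"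
      using split_one_block_refines Bh one_block_Pi_bar(1)[OF ph] by blast
    ultimately show ?thesis
      using refines_transitive by blast
  next
    case False
    then have not_above: "\<not> ?B \<subset> one_block P"
      using P unfolding above_flag_def by blast
    have "refines P h"
    proof (rule ccontr)
      assume "\<not> refines P h"
      then have "one_block h \<subseteq> one_block P"
        using simplices_comparable[OF S P hS] one_block_mono_Pi_bar[OF ph simplices_Pi_bar[OF S P]]
        by blast
      then show False
        using not_above Bh by blast
    qed
    then show ?thesis
      using refines_split_one_block blocks_split_by_flag_block[OF S P not_above] by blast
  qed
qed

lemma pivot_with_above_flag:
  assumes S: "S \<in> simplices n" and not_full: "\<not> n \<le> card (flag_block n S) + 1"
    and above: "above_flag n S \<noteq> {}"
  shows "pivot n S \<in> Pi_bar n" "pivot n S \<notin> A_set n" "one_block (pivot n S) = flag_block n S"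
    "\<forall>P\<in>S. refines P (pivot n S) \<or> refines (pivot n S) P"
proof -
  let ?B = "flag_block n S" and ?h = "finest (above_flag n S)"
  have pivot: "pivot n S = split_one_block ?B ?h"
    unfolding pivot_def using not_full above by simp
  have sub: "above_flag n S \<subseteq> S"
    unfolding above_flag_def by blast
  note h = finest_mem[OF S sub above]
  have hS: "?h \<in> S" and Bh: "?B \<subset> one_block ?h"
    using h(1) unfolding above_flag_def by auto
  have ph: "?h \<in> Pi_bar n"
    using simplices_Pi_bar[OF S hS] .
  note part = split_one_block_partition[OF ph one_in_flag_block Bh]
  obtain D where D: "D \<in> split_one_block ?B ?h" "1 \<notin> D" "card D \<noteq> 1"
    using split_above_flag_has_large_block[OF S hS Bh] by blast
  have "split_one_block ?B ?h \<noteq> (\<lambda>i. {i}) ` {1..n}"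
    using D(1,3) by auto
  moreover have "split_one_block ?B ?h \<noteq> {{1..n}}"
    using Bh one_block_psubset[OF ph] unfolding split_one_block_def by blast
  ultimately show "pivot n S \<in> Pi_bar n"
    unfolding pivot Pi_bar_def using part(1) by simp
  show "pivot n S \<notin> A_set n"
    unfolding pivot using A_set_singleton_block D by blast
  show "one_block (pivot n S) = ?B"
    unfolding pivot using part(2) .
  show "\<forall>P\<in>S. refines P (pivot n S) \<or> refines (pivot n S) P"
    unfolding pivot using split_finest_above_flag_comparable[OF S h] by blast
qed

lemma pivot_Pi_bar:
  assumes S: "S \<in> simplices n" and not_full: "\<not> n \<le> card (flag_block n S) + 1"
  shows "pivot n S \<in> Pi_bar n" "pivot n S \<notin> A_set n" "one_block (pivot n S) = flag_block n S"
    "insert (pivot n S) S \<in> simplices n"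
proof -
  have "pivot n S \<in> Pi_bar n \<and> pivot n S \<notin> A_set n \<and> one_block (pivot n S) = flag_block n S \<and>
      (\<forall>P\<in>S. refines P (pivot n S) \<or> refines (pivot n S) P)"
    using pivot_without_above_flag[OF S not_full] pivot_with_above_flag[OF S not_full]
    by (cases "above_flag n S = {}") simp_all
  then show "pivot n S \<in> Pi_bar n" "pivot n S \<notin> A_set n" "one_block (pivot n S) = flag_block n S"
    "insert (pivot n S) S \<in> simplices n"
    using simplices_insert[OF S] by simp_all
qed

lemma pivot_full: "n \<le> card (flag_block n S) + 1 \<Longrightarrow> pivot n S = {}"
  unfolding pivot_def by simp

lemma not_full_if_pivot_mem: "S \<in> simplices n \<Longrightarrow> pivot n S \<in> S \<Longrightarrow> \<not> n \<le> card (flag_block n S) + 1"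
  using pivot_full empty_notin_simplex by metis

lemma flag_unchanged_by_pivot:
  assumes S: "S \<in> simplices n" and not_full: "\<not> n \<le> card (flag_block n S) + 1"
    and T: "insert (pivot n S) T = insert (pivot n S) S"
  shows "flag_block n T = flag_block n S" "above_flag n T = above_flag n S"
proof -
  let ?v = "pivot n S"
  have v: "?v \<notin> A_set n" "one_block ?v = flag_block n S"
    using pivot_Pi_bar[OF S not_full] by auto
  have "T \<inter> A_set n = insert ?v T \<inter> A_set n"
    using v(1) by blast
  also have "\<dots> = insert ?v S \<inter> A_set n"
    by (simp only: T)
  also have "\<dots> = S \<inter> A_set n"
    using v(1) by blast
  finally show B: "flag_block n T = flag_block n S"
    by (rule flag_block_cong)
  have "above_flag n T = {P \<in> insert ?v T. flag_block n S \<subset> one_block P}"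
    unfolding above_flag_def B using v(2) by blast
  also have "\<dots> = {P \<in> insert ?v S. flag_block n S \<subset> one_block P}"
    by (simp only: T)
  also have "\<dots> = above_flag n S"
    unfolding above_flag_def using v(2) by blast
  finally show "above_flag n T = above_flag n S" .
qed

lemma pivot_unchanged_by_pivot:
  assumes "S \<in> simplices n" "\<not> n \<le> card (flag_block n S) + 1"
    "insert (pivot n S) T = insert (pivot n S) S"
  shows "pivot n T = pivot n S"
  using flag_unchanged_by_pivot[OF assms] by (rule pivot_cong)

lemma pivot_matched_above:
  assumes S: "S \<in> simplices n" and not_full: "\<not> n \<le> card (flag_block n S) + 1"
    and mem: "pivot n S \<in> S" and not_vertex: "S \<noteq> {pivot n S}"
  shows "(S - {pivot n S}, S) \<in> pivot_matching n"
proof -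
  have "S - {pivot n S} \<noteq> {}"
    using mem not_vertex by (auto simp: Diff_eq_empty_iff subset_singleton_iff)
  then have "S - {pivot n S} \<in> simplices n"
    by (rule simplices_subset[OF S Diff_subset])
  moreover have "pivot n (S - {pivot n S}) = pivot n S"
    by (rule pivot_unchanged_by_pivot[OF S not_full]) simp
  ultimately show ?thesis
    unfolding toggle_matching_def using S mem by simp
qed

lemma pivot_matched_below:
  assumes S: "S \<in> simplices n" and not_full: "\<not> n \<le> card (flag_block n S) + 1"
    and not_mem: "pivot n S \<notin> S"
  shows "(S, insert (pivot n S) S) \<in> pivot_matching n"
proof -
  have "pivot n (insert (pivot n S) S) = pivot n S"
    by (rule pivot_unchanged_by_pivot[OF S not_full]) simp
  then show ?thesis
    unfolding toggle_matching_def using S not_mem pivot_Pi_bar(4)[OF S not_full] by simp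
qed

lemma alpha_eq_two_block: "alpha n = {two_block n {1}}"
proof -
  have "{1..n} - {1} = {2..n}" by auto
  then show ?thesis unfolding alpha_def two_block_def by simp
qed

lemma two_block_one:
  "two_block n {1} \<in> Pi_bar n" "two_block n {1} \<notin> A_set n" "one_block (two_block n {1}) = {1}"
  using two_block_Pi_bar[of "{1}"] three_le_n by auto

lemma alpha_simplex: "alpha n \<in> simplices n"
  unfolding alpha_eq_two_block simplices_def using two_block_one refines_reflexive by auto

lemma pivot_without_A_vertices:
  assumes no_A: "S \<inter> A_set n = {}" and no_above: "above_flag n S = {}"
  shows "pivot n S = two_block n {1}"
proof -
  have "flag_block n S = {1}"
    using flag_vertices_subset no_A flag_block_no_flag by blast
  then show ?thesis
    unfolding pivot_def using no_above three_le_n by simp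
qed

lemma pivot_alpha: "pivot n (alpha n) = two_block n {1}"
proof (rule pivot_without_A_vertices)
  show no_A: "alpha n \<inter> A_set n = {}"
    unfolding alpha_eq_two_block using two_block_one(2) by blast
  then have "flag_block n (alpha n) = {1}"
    using flag_vertices_subset flag_block_no_flag by blast
  then show "above_flag n (alpha n) = {}"
    unfolding above_flag_def alpha_eq_two_block using two_block_one(3) by simp
qed

lemma alpha_if_pivot_vertex:
  assumes S: "S \<in> simplices n" and not_full: "\<not> n \<le> card (flag_block n S) + 1"
    and vertex: "S = {pivot n S}"
  shows "S = alpha n"
proof -
  obtain v where v: "v = pivot n S" by simp
  note v_props = pivot_Pi_bar[OF S not_full, folded v]
  have Sv: "S = {v}"
    using vertex[folded v] .
  have "S \<inter> A_set n = {}"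
    using v_props(2) by (simp add: Sv)
  moreover have "above_flag n S = {}"
    unfolding above_flag_def using v_props(3) by (simp add: Sv)
  ultimately have "v = two_block n {1}"
    using pivot_without_A_vertices v by simp
  then show ?thesis
    using Sv alpha_eq_two_block by simp
qed

end

section \<open>Critical chains and acyclicity\<close>

context partition_complex
begin

lemma all_sizes_if_full:
  assumes S: "S \<in> simplices n" and full: "n \<le> card (flag_block n S) + 1"
  shows "\<forall>k\<in>{2..n-1}. \<exists>Q\<in>S \<inter> A_set n. card (one_block Q) = k"
proof -
  have "flag_vertices n S \<noteq> {}"
  proof
    assume "flag_vertices n S = {}"
    then show False
      using flag_block_no_flag full three_le_n by simp
  qed
  then obtain F where F: "F \<in> flag_vertices n S" "one_block F = flag_block n S"
    using flag_block_attained[OF S] by blast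
  have "F \<in> S"
    using F(1) flag_vertices_subset by blast
  then have "card (one_block F) = n - 1"
    using card_one_block_less[OF simplices_Pi_bar[OF S]] F(2) full by fastforce
  then show ?thesis
    using F(1) unfolding flag_vertices_def by auto
qed

lemma block_disjoint_one_block: "P \<in> Pi_bar n \<Longrightarrow> D \<in> P \<Longrightarrow> 1 \<notin> D \<Longrightarrow> D \<inter> one_block P = {}"
  using Pi_bar_blocks_disjoint one_block_Pi_bar by blast

lemma A_set_if_card_one_block_eq:
  assumes P: "P \<in> Pi_bar n" and card: "card (one_block P) = n - 1"
  shows "P \<in> A_set n"
proof (rule A_setI[OF P])
  fix D assume D: "D \<in> P" "1 \<notin> D"
  have "card ({1..n} - one_block P) = 1"
    using card_Diff_subset[OF finite_one_block[OF P]] one_block_psubset[OF P] card three_le_n by auto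
  moreover have "D \<subseteq> {1..n} - one_block P"
    using Pi_bar_block_subset[OF P D(1)] block_disjoint_one_block[OF P D] by blast
  ultimately show "card D = 1"
    using card_eq_1_subset[OF Pi_bar_block_ne[OF P D(1)]] by blast
qed

lemma A_set_if_covered_by_A_vertex:
  assumes S: "S \<in> simplices n" and P: "P \<in> S" and Q: "Q \<in> S" "Q \<in> A_set n"
    and card: "card (one_block Q) = card (one_block P) + 1"
  shows "P \<in> A_set n"
proof (rule A_setI)
  show pP: "P \<in> Pi_bar n"
    using simplices_Pi_bar[OF S P] .
  have pQ: "Q \<in> Pi_bar n"
    using simplices_Pi_bar[OF S Q(1)] .
  have PQ: "refines P Q"
    using refines_if_card_one_block_less[OF S P Q(1)] card by simp
  fix D assume D: "D \<in> P" "1 \<notin> D"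
  then obtain E where E: "E \<in> Q" "D \<subseteq> E"
    using PQ unfolding refines_def by blast
  show "card D = 1"
  proof (cases "E = one_block Q")
    case True
    have "card (one_block Q - one_block P) = 1"
      using card_Diff_subset[OF finite_one_block[OF pP] one_block_mono_Pi_bar[OF pP pQ PQ]] card
      by simp
    moreover have "D \<subseteq> one_block Q - one_block P"
      using E True block_disjoint_one_block[OF pP D] by blast
    ultimately show ?thesis
      using card_eq_1_subset[OF Pi_bar_block_ne[OF pP D(1)]] by blast
  next
    case False
    then have "card E = 1"
      using A_set_singleton_block[OF Q(2) E(1)] one_block_Pi_bar_eq[OF pQ E(1)] by blast
    then show ?thesis
      using card_eq_1_subset[OF Pi_bar_block_ne[OF pP D(1)] E(2)] by blast
  qed
qed

lemma A_set_if_all_sizes: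
  assumes S: "S \<in> simplices n" and sizes: "\<forall>k\<in>{2..n-1}. \<exists>Q\<in>S \<inter> A_set n. card (one_block Q) = k"
    and P: "P \<in> S"
  shows "P \<in> A_set n"
proof (cases "card (one_block P) = n - 1")
  case True
  then show ?thesis
    using A_set_if_card_one_block_eq[OF simplices_Pi_bar[OF S P]] by blast
next
  case False
  have pP: "P \<in> Pi_bar n"
    using simplices_Pi_bar[OF S P] .
  have "0 < card (one_block P)"
    using finite_one_block[OF pP] one_block_Pi_bar(2)[OF pP] card_gt_0_iff by blast
  then have "card (one_block P) + 1 \<in> {2..n-1}"
    using card_one_block_less[OF pP] False by auto
  then obtain Q where "Q \<in> S" "Q \<in> A_set n" "card (one_block Q) = card (one_block P) + 1"
    using sizes by blast
  then show ?thesis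
    using A_set_if_covered_by_A_vertex[OF S P] by blast
qed

lemma card_one_block_image_C_set:
  assumes C: "S \<in> C_set n"
  shows "(\<lambda>P. card (one_block P)) ` S = {2..n-1}"
proof -
  have S: "S \<in> simplices n" and SA: "S \<subseteq> A_set n" and card: "card S = n - 2"
    using C unfolding C_set_def by auto
  show ?thesis
    using card_subset_eq[OF finite_atLeastAtMost card_one_block_A_chain_range[OF S SA]]
      card_image[OF card_one_block_inj_on_A_chain[OF S SA]] card three_le_n by simp
qed

lemma full_if_C_set:
  assumes C: "S \<in> C_set n"
  shows "n \<le> card (flag_block n S) + 1"
proof -
  have S: "S \<in> simplices n" and SA: "S \<subseteq> A_set n"
    using C unfolding C_set_def by auto
  have "n - 1 \<in> {2..n-1}"
    using three_le_n by simp
  then obtain P where P: "P \<in> S" "card (one_block P) = n - 1"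
    using card_one_block_image_C_set[OF C] by (metis imageE)
  have "P \<in> flag_vertices n S"
    unfolding flag_vertices_def
  proof (intro CollectI conjI ballI)
    show "P \<in> S \<inter> A_set n"
      using P(1) SA by blast
    fix k assume "k \<in> {2..card (one_block P)}"
    then obtain Q where Q: "Q \<in> S" "card (one_block Q) = k"
      using card_one_block_image_C_set[OF C] P(2) by (metis imageE)
    then have "one_block Q \<subseteq> one_block P"
      using one_block_subset_if_card_le[OF S P(1)] \<open>k \<in> {2..card (one_block P)}\<close> by simp
    then show "\<exists>Q\<in>S \<inter> A_set n. card (one_block Q) = k \<and> one_block Q \<subseteq> one_block P"
      using Q SA by blast
  qed
  then have "card (one_block P) \<le> card (flag_block n S)"
    using card_mono[OF finite_flag_block[OF S] flag_vertex_one_block_subset] by blast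
  then show ?thesis
    using P(2) by simp
qed

lemma C_set_iff_full:
  assumes S: "S \<in> simplices n"
  shows "S \<in> C_set n \<longleftrightarrow> n \<le> card (flag_block n S) + 1"
proof
  assume full: "n \<le> card (flag_block n S) + 1"
  note sizes = all_sizes_if_full[OF S full]
  have SA: "S \<subseteq> A_set n"
    using A_set_if_all_sizes[OF S sizes] by blast
  have "(\<lambda>P. card (one_block P)) ` S = {2..n-1}"
    using card_one_block_A_chain_range[OF S SA] sizes by fastforce
  then have "card S = n - 2"
    using card_image[OF card_one_block_inj_on_A_chain[OF S SA]] three_le_n by simp
  then show "S \<in> C_set n"
    unfolding C_set_def using S SA by blast
qed (rule full_if_C_set)

lemma matched_unless_C_set_or_alpha:
  assumes S: "S \<in> simplices n" and not_C: "S \<notin> C_set n" and not_alpha: "S \<noteq> alpha n"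
  shows "(S - {pivot n S}, S) \<in> pivot_matching n \<or> (S, insert (pivot n S) S) \<in> pivot_matching n"
proof -
  have not_full: "\<not> n \<le> card (flag_block n S) + 1"
    using C_set_iff_full[OF S] not_C by blast
  show ?thesis
  proof (cases "pivot n S \<in> S")
    case True
    then have "S \<noteq> {pivot n S}"
      using alpha_if_pivot_vertex[OF S not_full] not_alpha by blast
    then show ?thesis
      using pivot_matched_above[OF S not_full True] by blast
  qed (use pivot_matched_below[OF S not_full] in blast)
qed

lemma C_set_unmatched:
  assumes C: "S \<in> C_set n"
  shows "(S - {pivot n S}, S) \<notin> pivot_matching n" "(S, insert (pivot n S) S) \<notin> pivot_matching n"
proof -
  have S: "S \<in> simplices n"
    using C unfolding C_set_def by blast
  have "pivot n S = {}"
    using C_set_iff_full[OF S] C pivot_full by blast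
  then show "(S - {pivot n S}, S) \<notin> pivot_matching n" "(S, insert (pivot n S) S) \<notin> pivot_matching n"
    using S empty_notin_simplex toggle_matchingD(2,3,5) by metis+
qed

lemma alpha_unmatched:
  "(alpha n - {pivot n (alpha n)}, alpha n) \<notin> pivot_matching n"
  "(alpha n, insert (pivot n (alpha n)) (alpha n)) \<notin> pivot_matching n"
proof -
  have "alpha n - {pivot n (alpha n)} \<notin> simplices n"
    unfolding pivot_alpha unfolding alpha_eq_two_block simplices_def by simp
  moreover have "pivot n (alpha n) \<in> alpha n"
    unfolding pivot_alpha unfolding alpha_eq_two_block by simp
  ultimately show "(alpha n - {pivot n (alpha n)}, alpha n) \<notin> pivot_matching n"
    "(alpha n, insert (pivot n (alpha n)) (alpha n)) \<notin> pivot_matching n"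
    using toggle_matchingD(1,6) by blast+
qed

lemma critical_pivot_matching: "critical (simplices n) (pivot_matching n) = C_set n \<union> {alpha n}"
  unfolding critical_toggle_matching
  using matched_unless_C_set_or_alpha C_set_unmatched alpha_unmatched alpha_simplex
  unfolding C_set_def by blast

lemma acyclic_pivot_matching: "acyclic_matching (simplices n) (\<subset>) (pivot_matching n)"
proof (rule acyclic_toggle_matching[where key = "\<lambda>S. (flag_block n S, above_flag n S)"])
  \<comment> \<open>the key is ordered lexicographically (\<open>Product_Lexorder\<close>)\<close>
  fix a b :: simplex assume "a \<in> simplices n" "b \<in> simplices n" "a \<subseteq> b"
  then have "flag_block n a \<subseteq> flag_block n b"
    "flag_block n a = flag_block n b \<Longrightarrow> above_flag n a \<subseteq> above_flag n b"
    using flag_block_mono above_flag_mono by blast+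
  then show "(flag_block n a, above_flag n a) \<le> (flag_block n b, above_flag n b)"
    by (cases "flag_block n a = flag_block n b") auto
next
  fix a b :: simplex assume ab: "(a, b) \<in> pivot_matching n"
  note d = toggle_matchingD[OF ab]
  have "insert (pivot n b) a = insert (pivot n b) b"
    using d(3,4) by blast
  from flag_unchanged_by_pivot[OF d(2) not_full_if_pivot_mem[OF d(2,3)] this]
  show "(flag_block n a, above_flag n a) = (flag_block n b, above_flag n b)"
    by simp
next
  fix a b :: simplex
  assume "(flag_block n a, above_flag n a) = (flag_block n b, above_flag n b)"
  then show "pivot n a = pivot n b"
    by (intro pivot_cong) simp_all
qed

end

section \<open>Equivariance under permutations fixing 1\<close>

definition act_partition :: "(nat \<Rightarrow> nat) \<Rightarrow> partition \<Rightarrow> partition" where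
  "act_partition h P = (`) h ` P"

lemma act_simplex_eq: "act_simplex h S = act_partition h ` S"
  unfolding act_simplex_def act_partition_def by simp

lemma inj_act_partition:
  assumes h: "inj h"
  shows "inj (act_partition h)"
proof -
  have image: "inj ((`) h)"
    by (rule injI) (simp add: inj_image_eq_iff[OF h])
  show ?thesis
    unfolding act_partition_def by (rule injI) (simp add: inj_image_eq_iff[OF image])
qed

lemma act_partition_inv: "bij h \<Longrightarrow> act_partition (inv h) (act_partition h P) = P"
  unfolding act_partition_def by (simp add: image_image bij_is_inj image_inv_f_f)

lemma one_block_act_partition: "inj h \<Longrightarrow> h 1 = 1 \<Longrightarrow> one_block (act_partition h P) = h ` one_block P"
proof -
  assume h: "inj h" "h 1 = 1"
  have "1 \<in> h ` D \<longleftrightarrow> 1 \<in> D" for D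
    using inj_image_mem_iff[OF h(1), of 1 D] h(2) by simp
  then have "{B \<in> act_partition h P. 1 \<in> B} = (`) h ` {D \<in> P. 1 \<in> D}"
    unfolding act_partition_def by auto
  then show ?thesis
    unfolding one_block_def by auto
qed

lemma refines_act_partition_iff: "inj h \<Longrightarrow> refines (act_partition h P) (act_partition h Q) \<longleftrightarrow> refines P Q"
  unfolding refines_def act_partition_def by (auto simp: inj_image_subset_iff)

lemma stab1D:
  assumes "h \<in> stab1 n"
  shows "inj h" "bij h" "h 1 = 1" "h ` {1..n} = {1..n}" "inv h \<in> stab1 n"
proof -
  have h: "h permutes {1..n}" "h 1 = 1"
    using assms unfolding stab1_def by auto
  then show "inj h" "bij h" "h 1 = 1" "h ` {1..n} = {1..n}"
    using permutes_inj[OF h(1)] permutes_bij[OF h(1)] permutes_image[OF h(1)] by simp_all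
  have "inv h 1 = 1"
    using permutes_inv_eq[OF h(1)] h(2) by simp
  then show "inv h \<in> stab1 n"
    unfolding stab1_def using permutes_inv[OF h(1)] by simp
qed

context partition_complex
begin

lemma act_partition_Pi_bar:
  assumes h: "h \<in> stab1 n" and P: "P \<in> Pi_bar n"
  shows "act_partition h P \<in> Pi_bar n"
proof -
  note hp = stab1D[OF h]
  have "partition_on (h ` {1..n}) ((`) h ` P - {{}})"
    using partition_on_inj_image[OF Pi_bar_partition[OF P] inj_on_subset[OF hp(1) subset_UNIV]] .
  moreover have "(`) h ` P - {{}} = act_partition h P"
    using Pi_bar_block_ne[OF P] unfolding act_partition_def by blast
  ultimately have part: "partition_on {1..n} (act_partition h P)"
    using hp(4) by simp
  have "act_partition h ((\<lambda>i. {i}) ` {1..n}) = (\<lambda>i. {i}) ` (h ` {1..n})"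
    unfolding act_partition_def by (simp add: image_image)
  then have "act_partition h ((\<lambda>i. {i}) ` {1..n}) = (\<lambda>i. {i}) ` {1..n}"
    using hp(4) by simp
  moreover have "act_partition h {{1..n}} = {{1..n}}"
    unfolding act_partition_def using hp(4) by simp
  moreover have "act_partition h P \<noteq> act_partition h Q" if "P \<noteq> Q" for Q
    using inj_act_partition[OF hp(1)] that by (simp add: inj_eq)
  ultimately show ?thesis
    using P part unfolding Pi_bar_def by (metis (mono_tags, lifting) mem_Collect_eq)
qed

lemma act_partition_A_set:
  assumes h: "h \<in> stab1 n" and P: "P \<in> A_set n"
  shows "act_partition h P \<in> A_set n"
proof (rule A_setI)
  note hp = stab1D[OF h]
  show "act_partition h P \<in> Pi_bar n"
    using act_partition_Pi_bar[OF h A_set_Pi_bar[OF P]] .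
  fix B assume B: "B \<in> act_partition h P" "1 \<notin> B"
  then obtain D where D: "D \<in> P" "B = h ` D"
    unfolding act_partition_def by blast
  then have "1 \<notin> D"
    using B(2) hp(3) by (metis imageI)
  then show "card B = 1"
    using A_set_singleton_block[OF P D(1)] D(2) card_image[OF inj_on_subset[OF hp(1) subset_UNIV]]
    by simp
qed

lemma act_partition_Pi_bar_iff: "h \<in> stab1 n \<Longrightarrow> act_partition h P \<in> Pi_bar n \<longleftrightarrow> P \<in> Pi_bar n"
  using act_partition_Pi_bar[of h P] act_partition_Pi_bar[of "inv h" "act_partition h P"]
    stab1D[of h] act_partition_inv[of h P] by auto

lemma act_partition_A_set_iff: "h \<in> stab1 n \<Longrightarrow> act_partition h P \<in> A_set n \<longleftrightarrow> P \<in> A_set n"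
  using act_partition_A_set[of h P] act_partition_A_set[of "inv h" "act_partition h P"]
    stab1D[of h] act_partition_inv[of h P] by auto

lemma act_partition_simplices:
  assumes h: "h \<in> stab1 n" and S: "S \<in> simplices n"
  shows "act_partition h ` S \<in> simplices n"
  using S act_partition_Pi_bar_iff[OF h] refines_act_partition_iff[OF stab1D(1)[OF h]]
  unfolding simplices_def by auto

lemma card_one_block_act_partition:
  assumes h: "h \<in> stab1 n"
  shows "card (one_block (act_partition h P)) = card (one_block P)"
  using one_block_act_partition[OF stab1D(1,3)[OF h]]
    card_image[OF inj_on_subset[OF stab1D(1)[OF h] subset_UNIV]] by simp

lemma one_block_act_partition_subset_iff:
  "h \<in> stab1 n \<Longrightarrow> one_block (act_partition h Q) \<subseteq> one_block (act_partition h P) \<longleftrightarrow>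
     one_block Q \<subseteq> one_block P"
  using one_block_act_partition[of h] stab1D[of h] by (simp add: inj_image_subset_iff)

lemma flag_vertices_act_partition:
  assumes h: "h \<in> stab1 n"
  shows "flag_vertices n (act_partition h ` S) = act_partition h ` flag_vertices n S"
proof -
  have A: "act_partition h ` T \<inter> A_set n = act_partition h ` (T \<inter> A_set n)" for T
    using act_partition_A_set_iff[OF h] by blast
  have flag_condition:
    "(\<forall>k\<in>{2..card (one_block (act_partition h P))}. \<exists>Q\<in>act_partition h ` (S \<inter> A_set n).
        card (one_block Q) = k \<and> one_block Q \<subseteq> one_block (act_partition h P)) \<longleftrightarrow>
     (\<forall>k\<in>{2..card (one_block P)}. \<exists>Q\<in>S \<inter> A_set n.
        card (one_block Q) = k \<and> one_block Q \<subseteq> one_block P)" for P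
    by (simp add: card_one_block_act_partition[OF h] one_block_act_partition_subset_iff[OF h])
  show ?thesis
    unfolding flag_vertices_def A flag_condition[symmetric] by blast
qed

lemma flag_block_act_partition:
  assumes h: "h \<in> stab1 n"
  shows "flag_block n (act_partition h ` S) = h ` flag_block n S"
proof -
  note hp = stab1D[OF h]
  have "flag_block n (act_partition h ` S) =
      insert 1 (\<Union>(one_block ` act_partition h ` flag_vertices n S))"
    unfolding flag_block_def flag_vertices_act_partition[OF h] ..
  also have "\<dots> = insert 1 (\<Union>P\<in>flag_vertices n S. h ` one_block P)"
    using one_block_act_partition[OF hp(1,3)] by (simp add: image_image)
  also have "\<dots> = h ` flag_block n S"
    unfolding flag_block_def using hp(3) by (simp add: image_Union image_image)
  finally show ?thesis .
qed

lemma above_flag_act_partition: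
  assumes h: "h \<in> stab1 n"
  shows "above_flag n (act_partition h ` S) = act_partition h ` above_flag n S"
proof -
  note hp = stab1D[OF h]
  have "flag_block n (act_partition h ` S) \<subset> one_block (act_partition h P) \<longleftrightarrow>
      flag_block n S \<subset> one_block P" for P
    unfolding flag_block_act_partition[OF h] one_block_act_partition[OF hp(1,3)] using hp(1)
    by (simp add: inj_image_subset_iff inj_image_eq_iff psubset_eq)
  moreover have "{P \<in> act_partition h ` S. flag_block n (act_partition h ` S) \<subset> one_block P} =
      act_partition h ` {P \<in> S. flag_block n (act_partition h ` S) \<subset> one_block (act_partition h P)}"
    by blast
  ultimately show ?thesis
    unfolding above_flag_def by simp
qed

lemma finest_act_partition:
  assumes h: "h \<in> stab1 n" and S: "S \<in> simplices n" and X: "X \<subseteq> S" "X \<noteq> {}"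
  shows "finest (act_partition h ` X) = act_partition h (finest X)"
proof (rule finest_eq[OF act_partition_simplices[OF h S]])
  note least = finest_mem[OF S X]
  show "act_partition h ` X \<subseteq> act_partition h ` S"
    using X(1) by blast
  show "act_partition h (finest X) \<in> act_partition h ` X"
    using least(1) by blast
  show "\<forall>Q\<in>act_partition h ` X. refines (act_partition h (finest X)) Q"
    using least(2) refines_act_partition_iff[OF stab1D(1)[OF h]] by blast
qed

lemma two_block_act_partition:
  "h \<in> stab1 n \<Longrightarrow> two_block n (h ` B) = act_partition h (two_block n B)"
  unfolding two_block_def act_partition_def using stab1D[of h n] by (simp add: image_set_diff)

lemma split_one_block_act_partition:
  assumes h: "h \<in> stab1 n"
  shows "split_one_block (h ` B) (act_partition h P) = act_partition h (split_one_block B P)"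
proof -
  note hp = stab1D[OF h]
  have image: "inj ((`) h)"
    by (rule injI) (simp add: inj_image_eq_iff[OF hp(1)])
  show ?thesis
    unfolding split_one_block_def one_block_act_partition[OF hp(1,3)]
    using image_set_diff[OF image, of P "{one_block P}"] hp(1)
    by (simp add: act_partition_def image_set_diff)
qed

lemma pivot_act_partition:
  assumes h: "h \<in> stab1 n" and S: "S \<in> simplices n"
  shows "pivot n (act_partition h ` S) = act_partition h (pivot n S)"
proof -
  note hp = stab1D[OF h]
  have card: "card (h ` flag_block n S) = card (flag_block n S)"
    using card_image[OF inj_on_subset[OF hp(1) subset_UNIV]] .
  have empty: "act_partition h {} = {}"
    unfolding act_partition_def by simp
  show ?thesis
  proof (cases "above_flag n S = {}")
    case True
    then show ?thesis
      unfolding pivot_def flag_block_act_partition[OF h] above_flag_act_partition[OF h] card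
      using two_block_act_partition[OF h] empty by simp
  next
    case False
    have "finest (act_partition h ` above_flag n S) = act_partition h (finest (above_flag n S))"
      using finest_act_partition[OF h S _ False] unfolding above_flag_def by blast
    then show ?thesis
      unfolding pivot_def flag_block_act_partition[OF h] above_flag_act_partition[OF h] card
      using False split_one_block_act_partition[OF h] empty by simp
  qed
qed

end

theorem proposition11:
  fixes n :: nat
  assumes "n \<ge> 3"
  shows "\<exists>M. acyclic_matching (simplices n) (\<subset>) M \<and>
             (\<forall>h\<in>stab1 n. \<forall>(a,b)\<in>M. (act_simplex h a, act_simplex h b) \<in> M) \<and>
             critical (simplices n) M = C_set n \<union> {alpha n}"
proof (intro exI conjI ballI)
  interpret partition_complex n
    using assms by unfold_locales
  show "acyclic_matching (simplices n) (\<subset>) (pivot_matching n)"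
    by (rule acyclic_pivot_matching)
  show "critical (simplices n) (pivot_matching n) = C_set n \<union> {alpha n}"
    by (rule critical_pivot_matching)
  fix h and ab :: "simplex \<times> simplex"
  assume h: "h \<in> stab1 n" and ab: "ab \<in> pivot_matching n"
  show "case ab of (a, b) \<Rightarrow> (act_simplex h a, act_simplex h b) \<in> pivot_matching n"
    unfolding act_simplex_eq
    using toggle_matching_equivariant[where X = "simplices n" and v = "pivot n",
        OF inj_act_partition[OF stab1D(1)[OF h]] act_partition_simplices[OF h]
        pivot_act_partition[OF h]] ab
    by (cases ab) simp
qed

end
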